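(* Let $\mathbb{H}$ be a reproducing kernel Hilbert space with inner product $\langle\cdot,\cdot\rangle$ and feature map $\phi$, and let $(X,A,Y)$ be jointly distributed with $Y=\langle\phi(X),y\rangle$ and $A=\langle\phi(X),a\rangle$ for some nonzero $y,a\in\mathbb{H}$, with $\operatorname{Var}(Y),\operatorname{Var}(A)>0$. Then for every (possibly randomized) representation $Z=g(X)$ with $\operatorname{Var}\mathbb{E}[A\mid Z]=0$, $$\operatorname{Var}\mathbb{E}[Y\mid Z]\le \operatorname{Var}(Y)-\frac{\operatorname{Cov}(A,Y)^2}{\operatorname{Var}(A)}=\operatorname{Var}(Y)(1-\rho_{YA}^2),$$ where $\rho_{YA}$ is the correlation coefficient of $Y$ and $A$.
   Context: A (possibly randomized) representation is $Z=g(X,S)$ for a measurable $g$ and auxiliary randomness $S$ independent of $(X,A,Y)$. $\phi(X)$ is assumed to have finite second moment in $\mathbb{H}$. *)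

theory Defs
  imports "HOL-Probability.Probability"
begin

definition covariance :: "'a measure \<Rightarrow> ('a \<Rightarrow> real) \<Rightarrow> ('a \<Rightarrow> real) \<Rightarrow> real" where
  "covariance M f g =
     (\<integral>\<omega>. (f \<omega> - (\<integral>x. f x \<partial>M)) * (g \<omega> - (\<integral>x. g x \<partial>M)) \<partial>M)"

definition correlation :: "'a measure \<Rightarrow> ('a \<Rightarrow> real) \<Rightarrow> ('a \<Rightarrow> real) \<Rightarrow> real" where
  "correlation M f g =
     covariance M f g / sqrt (prob_space.variance M f * prob_space.variance M g)"

definition cond_exp_given :: "'a measure \<Rightarrow> ('a \<Rightarrow> 'z) \<Rightarrow> 'z measure \<Rightarrow> ('a \<Rightarrow> real) \<Rightarrow> 'a \<Rightarrow> real" where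
  "cond_exp_given M Z N f = real_cond_exp M (vimage_algebra (space M) Z N) f"

end

theory Submission
  imports Defs
begin

text \<open>Since \<open>E[A | Z]\<close> is almost surely constant, \<open>E[Y | Z]\<close> and \<open>E[Y - \<beta> A | Z]\<close> differ only
  by a constant, for every \<open>\<beta>\<close>. Conditional expectation does not increase variance (Jensen),
  so \<open>Var E[Y | Z] \<le> Var (Y - \<beta> A)\<close>, and the regression coefficient
  \<open>\<beta> = Cov(A, Y) / Var A\<close> makes the right-hand side \<open>Var Y - Cov(A, Y)\<^sup>2 / Var A\<close>.
  The kernel structure only serves to make \<open>A\<close> and \<open>Y\<close> square integrable (Cauchy-Schwarz).\<close>

lemma subalgebra_vimage_algebra:
  assumes "Z \<in> measurable M N"
  shows "subalgebra M (vimage_algebra (space M) Z N)"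
  unfolding subalgebra_def using assms
  by (auto simp: sets_vimage_algebra2 measurable_sets measurable_space)

lemma integrable_mult_square_integrable:
  fixes f g :: "'a \<Rightarrow> real"
  assumes [measurable]: "f \<in> borel_measurable M" "g \<in> borel_measurable M"
    and "integrable M (\<lambda>x. (f x)\<^sup>2)" "integrable M (\<lambda>x. (g x)\<^sup>2)"
  shows "integrable M (\<lambda>x. f x * g x)"
proof (rule Bochner_Integration.integrable_bound)
  show "integrable M (\<lambda>x. (f x)\<^sup>2 + (g x)\<^sup>2)"
    using assms by auto
  have "\<bar>u * v\<bar> \<le> u\<^sup>2 + v\<^sup>2" for u v :: real
    using sum_squares_bound[of "\<bar>u\<bar>" "\<bar>v\<bar>"] abs_ge_zero[of "u * v"]
    unfolding abs_mult power2_abs by linarith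
  then show "AE x in M. norm (f x * g x) \<le> norm ((f x)\<^sup>2 + (g x)\<^sup>2)"
    by simp
qed simp

lemma borel_measurable_inner_const [measurable]:
  fixes f :: "'a \<Rightarrow> 'h :: real_inner"
  assumes "f \<in> borel_measurable M"
  shows "(\<lambda>x. inner (f x) v) \<in> borel_measurable M"
  using borel_measurable_continuous_onI[OF continuous_on_inner[OF continuous_on_id continuous_on_const]]
    assms by (rule measurable_compose[rotated])

lemma square_integrable_inner:
  fixes f :: "'a \<Rightarrow> 'h :: real_inner"
  assumes [measurable]: "f \<in> borel_measurable M"
    and "integrable M (\<lambda>x. (norm (f x))\<^sup>2)"
  shows "integrable M (\<lambda>x. (inner (f x) v)\<^sup>2)"
proof (rule Bochner_Integration.integrable_bound)
  show "integrable M (\<lambda>x. (norm v)\<^sup>2 * (norm (f x))\<^sup>2)"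
    using assms(2) by simp
  have "(inner u v)\<^sup>2 \<le> (norm v)\<^sup>2 * (norm u)\<^sup>2" for u :: 'h
    using power_mono[OF Cauchy_Schwarz_ineq2[of u v], of 2]
    by (simp add: power2_abs power_mult_distrib mult.commute)
  then show "AE x in M. norm ((inner (f x) v)\<^sup>2) \<le> norm ((norm v)\<^sup>2 * (norm (f x))\<^sup>2)"
    by simp
qed simp

context prob_space
begin

lemma covariance_commute: "covariance M f g = covariance M g f"
  unfolding covariance_def by (simp add: mult.commute)

lemma variance_diff_scaled:
  fixes Y A :: "'a \<Rightarrow> real"
  assumes [measurable]: "Y \<in> borel_measurable M" "A \<in> borel_measurable M"
    and Y2: "integrable M (\<lambda>x. (Y x)\<^sup>2)" and A2: "integrable M (\<lambda>x. (A x)\<^sup>2)"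
  shows "variance (\<lambda>x. Y x - c * A x)
           = variance Y - 2 * c * covariance M A Y + c\<^sup>2 * variance A"
proof -
  have Y1: "integrable M Y" and A1: "integrable M A"
    using Y2 A2 by (auto intro: square_integrable_imp_integrable)
  define y' where "y' x = Y x - expectation Y" for x
  define a' where "a' x = A x - expectation A" for x
  have [measurable]: "y' \<in> borel_measurable M" "a' \<in> borel_measurable M"
    unfolding y'_def a'_def by measurable
  have y'2: "integrable M (\<lambda>x. (y' x)\<^sup>2)" and a'2: "integrable M (\<lambda>x. (a' x)\<^sup>2)"
    using Y1 Y2 A1 A2 by (auto simp: y'_def a'_def power2_diff)
  have a'y': "integrable M (\<lambda>x. a' x * y' x)"
    using a'2 y'2 by (intro integrable_mult_square_integrable) auto
  have centred: "Y x - c * A x - expectation (\<lambda>x. Y x - c * A x) = y' x - c * a' x" for x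
    using Y1 A1 by (simp add: y'_def a'_def algebra_simps)
  have "variance (\<lambda>x. Y x - c * A x)
          = (\<integral>x. (y' x)\<^sup>2 - 2 * c * (a' x * y' x) + c\<^sup>2 * (a' x)\<^sup>2 \<partial>M)"
    unfolding centred by (simp add: power2_diff power_mult_distrib algebra_simps)
  also have "\<dots> = (\<integral>x. (y' x)\<^sup>2 \<partial>M) - 2 * c * (\<integral>x. a' x * y' x \<partial>M) + c\<^sup>2 * (\<integral>x. (a' x)\<^sup>2 \<partial>M)"
    using y'2 a'2 a'y' by simp
  finally show ?thesis
    unfolding covariance_def y'_def a'_def .
qed

lemma variance_regression_residual:
  fixes Y A :: "'a \<Rightarrow> real"
  assumes "Y \<in> borel_measurable M" "A \<in> borel_measurable M"
    and "integrable M (\<lambda>x. (Y x)\<^sup>2)" "integrable M (\<lambda>x. (A x)\<^sup>2)"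
    and "variance A > 0"
  shows "variance (\<lambda>x. Y x - covariance M A Y / variance A * A x)
           = variance Y - (covariance M A Y)\<^sup>2 / variance A"
proof -
  have "w - 2 * (c / v) * c + (c / v)\<^sup>2 * v = w - c\<^sup>2 / v" if "v > 0" for w c v :: real
    using that by (simp add: field_simps power2_eq_square)
  from variance_diff_scaled[OF assms(1-4)] this[OF assms(5)] show ?thesis
    by (rule trans)
qed

lemma variance_residual_eq_correlation:
  assumes "variance Y > 0" "variance A > 0"
  shows "variance Y - (covariance M A Y)\<^sup>2 / variance A
           = variance Y * (1 - (correlation M Y A)\<^sup>2)"
  using assms
  by (simp add: correlation_def covariance_commute power_divide field_simps)

lemma AE_eq_expectation_if_variance_eq_0:
  fixes f :: "'a \<Rightarrow> real"
  assumes [measurable]: "f \<in> borel_measurable M"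
    and f2: "integrable M (\<lambda>x. (f x)\<^sup>2)" and "variance f = 0"
  shows "AE x in M. f x = expectation f"
proof -
  have "integrable M f"
    using f2 by (rule square_integrable_imp_integrable[rotated]) simp
  then have centred2: "integrable M (\<lambda>x. (f x - expectation f)\<^sup>2)"
    using f2 by (simp add: power2_diff)
  have "AE x in M. (f x - expectation f)\<^sup>2 = 0"
    using integral_nonneg_eq_0_iff_AE[OF centred2] \<open>variance f = 0\<close> by simp
  then show ?thesis
    by eventually_elim simp
qed

lemma variance_real_cond_exp_le:
  fixes f :: "'a \<Rightarrow> real"
  assumes "subalgebra M F" and f1: "integrable M f" and f2: "integrable M (\<lambda>x. (f x)\<^sup>2)"
  shows "variance (real_cond_exp M F f) \<le> variance f"
proof -
  interpret finite_measure_subalgebra M F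
    by unfold_locales fact
  let ?C = "real_cond_exp M F f"
  have C2: "integrable M (\<lambda>x. (?C x)\<^sup>2)"
    by (rule integrable_convex_cond_exp[where I=UNIV and q=power2])
       (auto simp: f1 f2 convex_power2)
  have Jensen: "AE x in M. (?C x)\<^sup>2 \<le> real_cond_exp M F (\<lambda>x. (f x)\<^sup>2) x"
    by (rule real_cond_exp_jensens_inequality(2)[where I=UNIV and q=power2])
       (auto simp: f1 f2 convex_power2)
  have "expectation (\<lambda>x. (?C x)\<^sup>2) \<le> expectation (real_cond_exp M F (\<lambda>x. (f x)\<^sup>2))"
    using C2 f2 Jensen by (intro integral_mono_AE) auto
  also have "\<dots> = expectation (\<lambda>x. (f x)\<^sup>2)"
    using f2 by blast
  finally have second_moment_le: "expectation (\<lambda>x. (?C x)\<^sup>2) \<le> expectation (\<lambda>x. (f x)\<^sup>2)" .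
  have "variance ?C = expectation (\<lambda>x. (?C x)\<^sup>2) - (expectation f)\<^sup>2"
    using variance_eq[OF real_cond_exp_int(1)[OF f1] C2] real_cond_exp_int(2)[OF f1] by simp
  also have "\<dots> \<le> expectation (\<lambda>x. (f x)\<^sup>2) - (expectation f)\<^sup>2"
    using second_moment_le by simp
  also have "\<dots> = variance f"
    using variance_eq[OF f1 f2] by simp
  finally show ?thesis .
qed

lemma variance_real_cond_exp_diff_scaled:
  fixes Y A :: "'a \<Rightarrow> real"
  assumes "subalgebra M F" and Y1: "integrable M Y" and A1: "integrable M A"
    and A_const: "AE x in M. real_cond_exp M F A x = expectation A"
  shows "variance (real_cond_exp M F (\<lambda>x. Y x - c * A x)) = variance (real_cond_exp M F Y)"
proof -
  interpret finite_measure_subalgebra M F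
    by unfold_locales fact
  let ?R = "\<lambda>x. Y x - c * A x"
  have cA1: "integrable M (\<lambda>x. c * A x)"
    using A1 by simp
  have E_CY: "expectation (real_cond_exp M F Y) = expectation Y"
    using Y1 by blast
  have E_CR: "expectation (real_cond_exp M F ?R) = expectation Y - c * expectation A"
    using real_cond_exp_int(2)[OF Bochner_Integration.integrable_diff[OF Y1 cA1]] Y1 A1 by simp
  have "AE x in M. real_cond_exp M F ?R x = real_cond_exp M F Y x - c * real_cond_exp M F A x"
    using real_cond_exp_diff[OF Y1 cA1] real_cond_exp_cmult[OF A1, where c=c]
    by eventually_elim simp
  then have "AE x in M. (real_cond_exp M F ?R x - expectation (real_cond_exp M F ?R))\<^sup>2
                      = (real_cond_exp M F Y x - expectation (real_cond_exp M F Y))\<^sup>2"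
    using A_const by eventually_elim (simp add: E_CY E_CR algebra_simps)
  then show ?thesis
    by (intro integral_cong_AE) auto
qed

lemma variance_real_cond_exp_le_residual:
  fixes Y A :: "'a \<Rightarrow> real"
  assumes F: "subalgebra M F"
    and [measurable]: "Y \<in> borel_measurable M" "A \<in> borel_measurable M"
    and Y2: "integrable M (\<lambda>x. (Y x)\<^sup>2)" and A2: "integrable M (\<lambda>x. (A x)\<^sup>2)"
    and A_uninformative: "variance (real_cond_exp M F A) = 0"
  shows "variance (real_cond_exp M F Y) \<le> variance (\<lambda>x. Y x - c * A x)"
proof -
  interpret finite_measure_subalgebra M F
    by unfold_locales fact
  have Y1: "integrable M Y" and A1: "integrable M A"
    using Y2 A2 by (auto intro: square_integrable_imp_integrable)
  have CA2: "integrable M (\<lambda>x. (real_cond_exp M F A x)\<^sup>2)"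
    by (rule integrable_convex_cond_exp[where I=UNIV and q=power2])
       (auto simp: A1 A2 convex_power2)
  have "AE x in M. real_cond_exp M F A x = expectation A"
    using AE_eq_expectation_if_variance_eq_0[OF _ CA2 A_uninformative] real_cond_exp_int(2)[OF A1]
    by simp
  then have "variance (real_cond_exp M F Y) = variance (real_cond_exp M F (\<lambda>x. Y x - c * A x))"
    using variance_real_cond_exp_diff_scaled[OF F Y1 A1] by simp
  also have "\<dots> \<le> variance (\<lambda>x. Y x - c * A x)"
  proof (rule variance_real_cond_exp_le[OF F])
    show "integrable M (\<lambda>x. Y x - c * A x)"
      using Y1 A1 by simp
    have "integrable M (\<lambda>x. Y x * A x)"
      using Y2 A2 by (intro integrable_mult_square_integrable) auto
    moreover have "(\<lambda>x. (Y x - c * A x)\<^sup>2) = (\<lambda>x. (Y x)\<^sup>2 - 2 * c * (Y x * A x) + c\<^sup>2 * (A x)\<^sup>2)"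
      by (auto simp: power2_diff power_mult_distrib algebra_simps)
    ultimately show "integrable M (\<lambda>x. (Y x - c * A x)\<^sup>2)"
      using Y2 A2 by simp
  qed
  finally show ?thesis .
qed

end

theorem theorem3:
  fixes M :: "'\<omega> measure"
    and NX :: "'x measure" and NS :: "'s measure" and NZ :: "'z measure"
    and \<phi> :: "'x \<Rightarrow> 'h :: {real_inner, complete_space}"
    and X :: "'\<omega> \<Rightarrow> 'x" and S :: "'\<omega> \<Rightarrow> 's"
    and g :: "'x \<times> 's \<Rightarrow> 'z"
    and y a :: 'h
    and Y A :: "'\<omega> \<Rightarrow> real"
  assumes prob: "prob_space M"
    and X_meas: "X \<in> measurable M NX"
    and phi_meas: "\<phi> \<in> borel_measurable NX"
    and second_moment: "integrable M (\<lambda>\<omega>. (norm (\<phi> (X \<omega>)))\<^sup>2)"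
    and Y_def: "\<And>\<omega>. Y \<omega> = inner (\<phi> (X \<omega>)) y"
    and A_def: "\<And>\<omega>. A \<omega> = inner (\<phi> (X \<omega>)) a"
    and y_nz: "y \<noteq> 0" and a_nz: "a \<noteq> 0"
    and varY: "prob_space.variance M Y > 0"
    and varA: "prob_space.variance M A > 0"
    and S_meas: "S \<in> measurable M NS"
    and S_indep: "prob_space.indep_set M
                    (sets (vimage_algebra (space M) S NS))
                    (sets (vimage_algebra (space M) (\<lambda>\<omega>. (X \<omega>, A \<omega>, Y \<omega>))
                       (NX \<Otimes>\<^sub>M (borel :: real measure) \<Otimes>\<^sub>M (borel :: real measure))))"
    and g_meas: "g \<in> measurable (NX \<Otimes>\<^sub>M NS) NZ"
    and fair: "prob_space.variance M
                 (cond_exp_given M (\<lambda>\<omega>. g (X \<omega>, S \<omega>)) NZ A) = 0"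
  shows "prob_space.variance M (cond_exp_given M (\<lambda>\<omega>. g (X \<omega>, S \<omega>)) NZ Y)
           \<le> prob_space.variance M Y - (covariance M A Y)\<^sup>2 / prob_space.variance M A
       \<and> prob_space.variance M Y - (covariance M A Y)\<^sup>2 / prob_space.variance M A
           = prob_space.variance M Y * (1 - (correlation M Y A)\<^sup>2)"
proof -
  interpret prob_space M by (rule prob)
  let ?F = "vimage_algebra (space M) (\<lambda>\<omega>. g (X \<omega>, S \<omega>)) NZ"
  have F: "subalgebra M ?F"
    using measurable_compose[OF measurable_Pair[OF X_meas S_meas] g_meas]
    by (rule subalgebra_vimage_algebra)
  have [measurable]: "(\<lambda>\<omega>. \<phi> (X \<omega>)) \<in> borel_measurable M"
    using phi_meas X_meas by measurable
  have Y: "Y = (\<lambda>\<omega>. inner (\<phi> (X \<omega>)) y)" and A: "A = (\<lambda>\<omega>. inner (\<phi> (X \<omega>)) a)"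
    using Y_def A_def by auto
  have [measurable]: "Y \<in> borel_measurable M" "A \<in> borel_measurable M"
    unfolding Y A by measurable
  have "integrable M (\<lambda>\<omega>. (Y \<omega>)\<^sup>2)" "integrable M (\<lambda>\<omega>. (A \<omega>)\<^sup>2)"
    unfolding Y A using second_moment by (auto intro: square_integrable_inner)
  then have "variance (real_cond_exp M ?F Y) \<le> variance Y - (covariance M A Y)\<^sup>2 / variance A"
    using variance_real_cond_exp_le_residual[OF F, of Y A "covariance M A Y / variance A"]
      variance_regression_residual[of Y A] fair varA
    by (simp add: cond_exp_given_def)
  then show ?thesis
    using variance_residual_eq_correlation[OF varY varA] by (simp add: cond_exp_given_def)
qed

end
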